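(* Let $R$ be any finite Frobenius ring and let $\mathcal{P}_{\mathrm{hom}}=P_0\mid P_1\mid\cdots\mid P_M$ be its homogeneous weight partition. Then for each generating character $\chi$ of $R$, \[ \sum_{a\in P_m}\chi(ab)=\sum_{a\in P_m}\chi(ba)\quad\text{for all } b\in R \text{ and } m=0,\ldots,M. \] As a consequence, the left and right dual partitions of $\mathcal{P}_{\mathrm{hom}}$ coincide.
   Context: $\mathcal{P}_{\mathrm{hom}}$ is the partition of $R$ into level sets of the normalized homogeneous weight $\omega$ (the unique map $R\to\mathbb{R}$ with $\omega(0)=0$, $\omega(x)=\omega(y)$ whenever $Rx=Ry$, and $\sum_{y\in Rx}\omega(y)=|Rx|$ for $x\neq0$). Characters are group homomorphisms $(R,+)\to\mathbb{C}^*$; $\widehat{R}$ is an $R$-$R$-bimodule via $(r\cdot\chi)(v)=\chi(vr)$, $(\chi\cdot r)(v)=\chi(rv)$; a generating character is $\chi$ with $\widehat{R}=R\cdot\chi$ (equivalently $\widehat{R}=\chi\cdot R$); $R$ is Frobenius iff one exists. For a partition $\mathcal{P}=P_0\mid\cdots\mid P_M$ of $R$, the left $\chi$-dual partition is given by $b\sim b'$ iff $\sum_{a\in P_m}\chi(ab)=\sum_{a\in P_m}\chi(ab')$ for all $m$, and the right $\chi$-dual by $b\sim b'$ iff $\sum_{a\in P_m}\chi(ba)=\sum_{a\in P_m}\chi(b'a)$ for all $m$. *)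

theory Defs
  imports Complex_Main
begin

text \<open>A finite ring is modelled by a type of class ring_1 and finite (not necessarily commutative).
Characters are group homomorphisms (R,+) to the multiplicative group of nonzero complex numbers.\<close>

definition character :: "('a::ring_1 \<Rightarrow> complex) \<Rightarrow> bool" where
  "character \<chi> \<longleftrightarrow> (\<forall>x. \<chi> x \<noteq> 0) \<and> (\<forall>x y. \<chi> (x + y) = \<chi> x * \<chi> y)"

text \<open>Left action (r . chi)(v) = chi(v r); chi is generating iff every character is r . chi.\<close>
definition generating_character :: "('a::ring_1 \<Rightarrow> complex) \<Rightarrow> bool" where
  "generating_character \<chi> \<longleftrightarrow> character \<chi> \<and>
     (\<forall>\<psi>. character \<psi> \<longrightarrow> (\<exists>r. \<psi> = (\<lambda>v. \<chi> (v * r))))"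

definition frobenius_ring :: "'a::ring_1 itself \<Rightarrow> bool" where
  "frobenius_ring _ \<longleftrightarrow> (\<exists>\<chi>::'a \<Rightarrow> complex. generating_character \<chi>)"

definition left_ideal_gen :: "'a::ring_1 \<Rightarrow> 'a set" where
  "left_ideal_gen x = {r * x | r. True}"

definition is_hom_weight :: "('a::{ring_1,finite} \<Rightarrow> real) \<Rightarrow> bool" where
  "is_hom_weight \<omega> \<longleftrightarrow> \<omega> 0 = 0
     \<and> (\<forall>x y. left_ideal_gen x = left_ideal_gen y \<longrightarrow> \<omega> x = \<omega> y)
     \<and> (\<forall>x. x \<noteq> 0 \<longrightarrow> (\<Sum>y\<in>left_ideal_gen x. \<omega> y) = real (card (left_ideal_gen x)))"

definition level_partition :: "('a \<Rightarrow> real) \<Rightarrow> 'a set set" where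
  "level_partition \<omega> = {{a. \<omega> a = t} | t. t \<in> range \<omega>}"

definition left_dual_rel :: "'a set set \<Rightarrow> ('a::ring_1 \<Rightarrow> complex) \<Rightarrow> 'a \<Rightarrow> 'a \<Rightarrow> bool" where
  "left_dual_rel \<P> \<chi> b b' \<longleftrightarrow>
     (\<forall>P\<in>\<P>. (\<Sum>a\<in>P. \<chi> (a * b)) = (\<Sum>a\<in>P. \<chi> (a * b')))"

definition right_dual_rel :: "'a set set \<Rightarrow> ('a::ring_1 \<Rightarrow> complex) \<Rightarrow> 'a \<Rightarrow> 'a \<Rightarrow> bool" where
  "right_dual_rel \<P> \<chi> b b' \<longleftrightarrow>
     (\<forall>P\<in>\<P>. (\<Sum>a\<in>P. \<chi> (b * a)) = (\<Sum>a\<in>P. \<chi> (b' * a)))"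

end

theory Submission
  imports Defs
begin

text \<open>A generating character \<open>\<chi>\<close> defines the Nakayama map \<open>\<sigma>\<close> by
  \<open>\<chi> (b * v) = \<chi> (v * \<sigma> b)\<close>. Because characters of a finite abelian group separate
  points, \<open>\<chi>\<close> is faithful on both sides, which makes \<open>\<sigma>\<close> a ring automorphism with
  \<open>\<chi> \<circ> \<sigma> = \<chi>\<close>. The axioms of the homogeneous weight determine it uniquely and are
  preserved by ring automorphisms, so \<open>\<omega> \<circ> \<sigma> = \<omega>\<close> and \<open>\<sigma>\<close> permutes every level
  set \<open>P\<close>. Reindexing by \<open>\<sigma>\<close> then turns the sum of \<open>\<chi> (a * b)\<close> over \<open>P\<close> into the
  sum of \<open>\<chi> (a * \<sigma> b) = \<chi> (b * a)\<close>.\<close>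

section \<open>Characters of finite abelian groups separate points\<close>

definition add_subgroup :: "'a::ring_1 set \<Rightarrow> bool" where
  "add_subgroup H \<longleftrightarrow> 0 \<in> H \<and> (\<forall>x\<in>H. \<forall>y\<in>H. x + y \<in> H) \<and> (\<forall>x\<in>H. - x \<in> H)"

definition character_on :: "'a::ring_1 set \<Rightarrow> ('a \<Rightarrow> complex) \<Rightarrow> bool" where
  "character_on H \<psi> \<longleftrightarrow> (\<forall>x\<in>H. \<psi> x \<noteq> 0) \<and> (\<forall>x\<in>H. \<forall>y\<in>H. \<psi> (x + y) = \<psi> x * \<psi> y)"

lemma character_on_UNIV_iff: "character_on UNIV \<psi> \<longleftrightarrow> character \<psi>"
  by (simp add: character_on_def character_def)

lemma add_subgroup_of_int_mult:
  assumes H: "add_subgroup H" and h: "h \<in> H"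
  shows "of_int k * h \<in> H"
proof -
  have nat: "of_nat n * h \<in> H" for n
    using H h by (induction n) (auto simp: add_subgroup_def distrib_right)
  show ?thesis
  proof (cases k rule: int_cases2)
    case (nonpos n)
    then show ?thesis using nat[of n] H by (simp add: add_subgroup_def)
  qed (simp add: nat)
qed

lemma character_on_zero:
  assumes "add_subgroup H" "character_on H \<psi>"
  shows "\<psi> 0 = 1"
proof -
  have "\<psi> 0 = \<psi> 0 * \<psi> 0" "\<psi> 0 \<noteq> 0"
    using assms unfolding add_subgroup_def character_on_def by (metis add_0)+
  then show ?thesis by simp
qed

lemma character_on_uminus:
  assumes H: "add_subgroup H" and \<psi>: "character_on H \<psi>" and h: "h \<in> H"
  shows "\<psi> (- h) = inverse (\<psi> h)"
proof -
  have "\<psi> (- h + h) = \<psi> (- h) * \<psi> h" "\<psi> h \<noteq> 0"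
    using assms unfolding add_subgroup_def character_on_def by blast+
  then show ?thesis using character_on_zero[OF H \<psi>] by (simp add: field_simps)
qed

lemma character_on_of_int_mult:
  assumes H: "add_subgroup H" and \<psi>: "character_on H \<psi>" and h: "h \<in> H"
  shows "\<psi> (of_int k * h) = \<psi> h powi k"
proof -
  have nat: "\<psi> (of_nat n * h) = \<psi> h ^ n" for n
  proof (induction n)
    case (Suc n)
    have "of_nat n * h \<in> H" using add_subgroup_of_int_mult[OF H h, of "int n"] by simp
    then show ?case
      using Suc \<psi> h by (simp add: character_on_def distrib_right)
  qed (simp add: character_on_zero[OF H \<psi>])
  show ?thesis
  proof (cases k rule: int_cases2)
    case (nonpos n)
    have "of_nat n * h \<in> H" using add_subgroup_of_int_mult[OF H h, of "int n"] by simp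
    then show ?thesis
      using nonpos nat character_on_uminus[OF H \<psi>] by (simp add: power_int_minus)
  qed (simp add: nat)
qed

lemma character_diff:
  assumes "character \<psi>" shows "\<psi> (x - y) = \<psi> x / \<psi> y"
proof -
  have "\<psi> (x + - y) = \<psi> x * \<psi> (- y)" using assms unfolding character_def by blast
  then show ?thesis
    using assms character_on_uminus[of UNIV \<psi> y]
    by (simp add: character_on_UNIV_iff add_subgroup_def field_simps)
qed

definition add_order_mod :: "'a::ring_1 set \<Rightarrow> 'a \<Rightarrow> nat" where
  "add_order_mod H g = (LEAST k. 0 < k \<and> of_nat k * g \<in> H)"

lemma add_order_mod_pos_mult_mem:
  fixes g :: "'a::{ring_1,finite}"
  assumes H: "add_subgroup H"
  shows "0 < add_order_mod H g" "of_nat (add_order_mod H g) * g \<in> H"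
proof -
  let ?f = "\<lambda>k::nat. of_nat k * g"
  have "\<not> inj ?f"
    using finite_imageD[of ?f UNIV] by auto
  then obtain a b where ab: "a < b" "?f a = ?f b"
    unfolding inj_def by (metis linorder_neqE_nat)
  have "?f (b - a) = 0"
    using ab by (simp add: of_nat_diff left_diff_distrib)
  then have "\<exists>k. 0 < k \<and> ?f k \<in> H"
    using ab(1) H by (intro exI[of _ "b - a"]) (simp add: add_subgroup_def)
  from LeastI_ex[OF this] show "0 < add_order_mod H g" "?f (add_order_mod H g) \<in> H"
    unfolding add_order_mod_def by blast+
qed

lemma add_order_mod_dvd:
  fixes g :: "'a::{ring_1,finite}"
  assumes H: "add_subgroup H" and j: "of_int j * g \<in> H"
  shows "int (add_order_mod H g) dvd j"
proof -
  define m where "m = add_order_mod H g"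
  note m = add_order_mod_pos_mult_mem[OF H, of g, folded m_def]
  define r where "r = j mod int m"
  have "(of_int r :: 'a) = of_int j - of_int (j div int m) * of_nat m"
    unfolding r_def by (metis minus_div_mult_eq_mod of_int_diff of_int_mult of_int_of_nat_eq)
  then have "of_int r * g = of_int j * g + - (of_int (j div int m) * (of_nat m * g))"
    by (simp add: left_diff_distrib mult.assoc)
  also have "\<dots> \<in> H"
    using H j add_subgroup_of_int_mult[OF H m(2)] unfolding add_subgroup_def by blast
  finally have r_in: "of_nat (nat r) * g \<in> H"
    using m(1) by (simp add: r_def)
  have r_range: "0 \<le> r" "r < int m"
    using m(1) by (simp_all add: r_def)
  have "r = 0"
  proof (rule ccontr)
    assume "r \<noteq> 0"
    then have "m \<le> nat r"
      using r_in r_range unfolding m_def add_order_mod_def by (intro Least_le) simp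
    then show False using r_range by linarith
  qed
  then show ?thesis by (simp add: r_def m_def dvd_eq_mod_eq_0)
qed

definition adjoin :: "'a::ring_1 set \<Rightarrow> 'a \<Rightarrow> 'a set" where
  "adjoin H g = {h + of_int k * g | h k. h \<in> H}"

lemma subset_adjoin: "H \<subseteq> adjoin H g"
  unfolding adjoin_def by (force intro: exI[of _ 0])

lemma mem_adjoin: "add_subgroup H \<Longrightarrow> g \<in> adjoin H g"
  unfolding adjoin_def add_subgroup_def by (force intro: exI[of _ 0] exI[of _ 1])

lemma add_subgroup_adjoin:
  assumes H: "add_subgroup H"
  shows "add_subgroup (adjoin H g)"
  unfolding add_subgroup_def
proof (intro conjI ballI)
  show "0 \<in> adjoin H g"
    using H subset_adjoin unfolding add_subgroup_def by blast
next
  fix x y assume "x \<in> adjoin H g" "y \<in> adjoin H g"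
  then obtain h k h' k' where "h \<in> H" "h' \<in> H" "x = h + of_int k * g" "y = h' + of_int k' * g"
    unfolding adjoin_def by blast
  moreover have "h + h' \<in> H" using H calculation unfolding add_subgroup_def by blast
  moreover have "x + y = (h + h') + of_int (k + k') * g"
    using calculation by (simp add: distrib_right add_ac)
  ultimately show "x + y \<in> adjoin H g"
    unfolding adjoin_def by blast
next
  fix x assume "x \<in> adjoin H g"
  then obtain h k where "h \<in> H" "x = h + of_int k * g" unfolding adjoin_def by blast
  moreover have "- h \<in> H" using H calculation unfolding add_subgroup_def by blast
  moreover have "- x = - h + of_int (- k) * g" using calculation by simp
  ultimately show "- x \<in> adjoin H g"
    unfolding adjoin_def by blast
qed

text \<open>Extending \<open>\<psi>\<close> by \<open>g \<mapsto> w\<close> is consistent because every relation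
  \<open>k g \<in> H\<close> is a multiple of the one with \<open>k = add_order_mod H g\<close>, which \<open>w\<close> respects.\<close>

lemma adjoin_value_unique:
  fixes g :: "'a::{ring_1,finite}"
  assumes H: "add_subgroup H" and \<psi>: "character_on H \<psi>"
    and w: "w ^ add_order_mod H g = \<psi> (of_nat (add_order_mod H g) * g)"
    and h: "h \<in> H" "h' \<in> H" and eq: "h + of_int k * g = h' + of_int k' * g"
  shows "\<psi> h * w powi k = \<psi> h' * w powi k'"
proof -
  define m where "m = add_order_mod H g"
  note m = add_order_mod_pos_mult_mem[OF H, of g, folded m_def]
  have "\<psi> (of_nat m * g) \<noteq> 0" using \<psi> m(2) unfolding character_on_def by blast
  then have w0: "w \<noteq> 0" using w m(1) by (auto simp: m_def zero_power)
  have diff: "of_int (k - k') * g = h' - h"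
    using eq by (simp add: algebra_simps)
  also have "\<dots> \<in> H" using H h unfolding add_subgroup_def by (metis diff_conv_add_uminus)
  finally obtain j where j: "k - k' = int m * j"
    using add_order_mod_dvd[OF H] by (fastforce simp: m_def dvd_def)
  have "of_int j * (of_nat m * g) = of_int (k - k') * g"
    unfolding j by (simp add: mult.assoc mult_of_int_commute)
  then have "h' = h + of_int j * (of_nat m * g)"
    using diff by simp
  then have "\<psi> h' = \<psi> h * \<psi> (of_int j * (of_nat m * g))"
    using \<psi> h(1) add_subgroup_of_int_mult[OF H m(2)] unfolding character_on_def by blast
  also have "\<psi> (of_int j * (of_nat m * g)) = w powi (k - k')"
    using character_on_of_int_mult[OF H \<psi> m(2)] w
    by (simp add: j m_def power_int_mult)
  finally show ?thesis using w0 by (simp add: power_int_diff)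
qed

lemma character_on_adjoin:
  fixes g :: "'a::{ring_1,finite}"
  assumes H: "add_subgroup H" and \<psi>: "character_on H \<psi>"
    and w: "w ^ add_order_mod H g = \<psi> (of_nat (add_order_mod H g) * g)"
  obtains \<psi>' where "character_on (adjoin H g) \<psi>'" "\<forall>x\<in>H. \<psi>' x = \<psi> x" "\<psi>' g = w"
proof
  define \<psi>' where
    "\<psi>' x = (SOME c. \<exists>h\<in>H. \<exists>k. x = h + of_int k * g \<and> c = \<psi> h * w powi k)" for x
  have val: "\<psi>' (h + of_int k * g) = \<psi> h * w powi k" if "h \<in> H" for h k
  proof -
    have "\<exists>c. \<exists>h'\<in>H. \<exists>k'. h + of_int k * g = h' + of_int k' * g \<and> c = \<psi> h' * w powi k'"
      using that by blast
    from someI_ex[OF this] show ?thesis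
      unfolding \<psi>'_def using adjoin_value_unique[OF H \<psi> w that] by metis
  qed
  have w0: "w \<noteq> 0"
    using add_order_mod_pos_mult_mem[OF H, of g] w \<psi> unfolding character_on_def by (auto simp: zero_power)
  show "character_on (adjoin H g) \<psi>'"
    unfolding character_on_def
  proof (intro conjI ballI)
    fix x assume "x \<in> adjoin H g"
    then obtain h k where "h \<in> H" "x = h + of_int k * g" unfolding adjoin_def by blast
    then show "\<psi>' x \<noteq> 0" using val \<psi> w0 unfolding character_on_def by simp
  next
    fix x y assume "x \<in> adjoin H g" "y \<in> adjoin H g"
    then obtain h k h' k' where hk: "h \<in> H" "h' \<in> H"
      and xy: "x = h + of_int k * g" "y = h' + of_int k' * g"
      unfolding adjoin_def by blast
    have sum: "x + y = (h + h') + of_int (k + k') * g" by (simp add: xy distrib_right add_ac)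
    have "h + h' \<in> H" "\<psi> (h + h') = \<psi> h * \<psi> h'"
      using H \<psi> hk unfolding add_subgroup_def character_on_def by blast+
    then have "\<psi>' (x + y) = \<psi> h * \<psi> h' * w powi (k + k')"
      unfolding sum by (simp only: val)
    also have "\<dots> = \<psi>' x * \<psi>' y"
      using w0 by (simp add: xy val hk power_int_add mult_ac)
    finally show "\<psi>' (x + y) = \<psi>' x * \<psi>' y" .
  qed
  show "\<forall>x\<in>H. \<psi>' x = \<psi> x" using val[of _ 0] by simp
  show "\<psi>' g = w"
    using val[of 0 1] H character_on_zero[OF H \<psi>] by (simp add: add_subgroup_def)
qed

lemma complex_nth_root_exists:
  fixes c :: complex assumes "c \<noteq> 0" "0 < n" obtains w where "w ^ n = c"
proof -
  from bij_betw_nth_root_unity[OF assms] obtain c' where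
    "(\<lambda>z. c' * z) ` {z. z ^ n = 1} = {z. z ^ n = c}" unfolding bij_betw_def by blast
  moreover have "(1::complex) \<in> {z. z ^ n = 1}" by simp
  ultimately show ?thesis using that by blast
qed

lemma nontrivial_root_of_unity:
  assumes "2 \<le> n" obtains w :: complex where "w ^ n = 1" "w \<noteq> 1"
proof -
  have "\<not> {z::complex. z ^ n = 1} \<subseteq> {1}"
  proof
    assume "{z::complex. z ^ n = 1} \<subseteq> {1}"
    then have "card {z::complex. z ^ n = 1} \<le> 1"
      using card_mono[of "{1::complex}"] by fastforce
    then show False using card_roots_unity_eq[of n] assms by simp
  qed
  then show ?thesis using that by blast
qed

lemma character_on_extends_to_character:
  fixes H :: "'a::{ring_1,finite} set"
  assumes "add_subgroup H" "character_on H \<psi>"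
  shows "\<exists>\<Psi>. character \<Psi> \<and> (\<forall>x\<in>H. \<Psi> x = \<psi> x)"
  using assms
proof (induction "card (UNIV - H)" arbitrary: H \<psi> rule: less_induct)
  case less
  show ?case
  proof (cases "H = UNIV")
    case True
    then show ?thesis using less.prems by (auto simp: character_on_UNIV_iff)
  next
    case False
    then obtain g where g: "g \<notin> H" by blast
    define m where "m = add_order_mod H g"
    note m = add_order_mod_pos_mult_mem[OF less.prems(1), of g, folded m_def]
    have "\<psi> (of_nat m * g) \<noteq> 0" using m(2) less.prems(2) unfolding character_on_def by blast
    then obtain w where "w ^ m = \<psi> (of_nat m * g)" using complex_nth_root_exists m(1) by metis
    then obtain \<psi>' where \<psi>': "character_on (adjoin H g) \<psi>'" "\<forall>x\<in>H. \<psi>' x = \<psi> x"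
      using character_on_adjoin[OF less.prems] by (metis m_def)
    have "UNIV - adjoin H g \<subset> UNIV - H"
      using subset_adjoin mem_adjoin[OF less.prems(1)] g by blast
    then have "card (UNIV - adjoin H g) < card (UNIV - H)" by (intro psubset_card_mono) auto
    from less.hyps[OF this add_subgroup_adjoin[OF less.prems(1)] \<psi>'(1)] \<psi>'(2) subset_adjoin
    show ?thesis by fastforce
  qed
qed

lemma characters_separate_points:
  fixes d :: "'a::{ring_1,finite}" assumes "d \<noteq> 0"
  obtains \<psi> where "character \<psi>" "\<psi> d \<noteq> 1"
proof -
  have H0: "add_subgroup {0::'a}" and \<psi>0: "character_on {0::'a} (\<lambda>_. 1)"
    by (simp_all add: add_subgroup_def character_on_def)
  define m where "m = add_order_mod {0} d"
  note m = add_order_mod_pos_mult_mem[OF H0, of d, folded m_def]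
  have "2 \<le> m" using m assms by (cases "m = 1") auto
  then obtain w :: complex where w: "w ^ m = 1" "w \<noteq> 1" by (rule nontrivial_root_of_unity)
  obtain \<psi>' where \<psi>': "character_on (adjoin {0} d) \<psi>'" "\<psi>' d = w"
    using character_on_adjoin[OF H0 \<psi>0, of w d] w by (auto simp: m_def)
  obtain \<Psi> where "character \<Psi>" "\<forall>x\<in>adjoin {0} d. \<Psi> x = \<psi>' x"
    using character_on_extends_to_character[OF add_subgroup_adjoin[OF H0] \<psi>'(1)] by blast
  then show ?thesis using that mem_adjoin[OF H0] \<psi>'(2) w(2) by metis
qed

section \<open>The Nakayama automorphism of a generating character\<close>

definition nakayama :: "('a::ring_1 \<Rightarrow> complex) \<Rightarrow> 'a \<Rightarrow> 'a" where
  "nakayama \<chi> b = (SOME r. \<forall>v. \<chi> (b * v) = \<chi> (v * r))"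

context
  fixes \<chi> :: "'a::{ring_1,finite} \<Rightarrow> complex"
  assumes gen: "generating_character \<chi>"
begin

lemma generating_character_left_faithful:
  assumes "\<And>v. \<chi> (b * v) = \<chi> (b' * v)"
  shows "b = b'"
proof (rule ccontr)
  assume "b \<noteq> b'"
  then obtain \<psi> where \<psi>: "character \<psi>" "\<psi> (b - b') \<noteq> 1"
    using characters_separate_points[of "b - b'"] by auto
  then obtain s where s: "\<psi> = (\<lambda>v. \<chi> (v * s))"
    using gen unfolding generating_character_def by blast
  have \<chi>: "character \<chi>" using gen unfolding generating_character_def by blast
  have "\<psi> (b - b') = \<chi> (b * s) / \<chi> (b' * s)"
    unfolding s left_diff_distrib by (rule character_diff[OF \<chi>])
  also have "\<dots> = 1" using assms[of s] \<chi> by (simp add: character_def)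
  finally show False using \<psi>(2) by contradiction
qed

lemma nakayama_eq: "\<chi> (b * v) = \<chi> (v * nakayama \<chi> b)"
proof -
  have "character (\<lambda>v. \<chi> (b * v))"
    using gen by (simp add: generating_character_def character_def distrib_left)
  then have "\<exists>r. \<forall>v. \<chi> (b * v) = \<chi> (v * r)"
    using gen unfolding generating_character_def by metis
  from someI_ex[OF this] show ?thesis unfolding nakayama_def by blast
qed

lemma bij_nakayama: "bij (nakayama \<chi>)"
proof -
  have "inj (nakayama \<chi>)"
  proof
    fix a b assume eq: "nakayama \<chi> a = nakayama \<chi> b"
    show "a = b"
    proof (rule generating_character_left_faithful)
      fix v
      show "\<chi> (a * v) = \<chi> (b * v)" using nakayama_eq[of a v] nakayama_eq[of b v] eq by simp
    qed
  qed
  then show ?thesis by (simp add: bij_def finite_UNIV_inj_surj)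
qed

text \<open>Right faithfulness needs no counting of characters: it follows from left
  faithfulness because left translates of \<open>\<chi>\<close> already exhaust all right translates.\<close>

lemma generating_character_right_faithful:
  assumes "\<And>v. \<chi> (v * r) = \<chi> (v * r')"
  shows "r = r'"
proof -
  obtain a a' where r: "r = nakayama \<chi> a" "r' = nakayama \<chi> a'"
    using bij_is_surj[OF bij_nakayama] by (metis surjE)
  have "a = a'"
  proof (rule generating_character_left_faithful)
    fix v
    show "\<chi> (a * v) = \<chi> (a' * v)"
      using assms[of v] nakayama_eq[of a v] nakayama_eq[of a' v] r by simp
  qed
  then show ?thesis by (simp add: r)
qed

lemma nakayama_mult: "nakayama \<chi> (a * b) = nakayama \<chi> a * nakayama \<chi> b"
proof (rule generating_character_right_faithful)
  fix v
  have "\<chi> (v * nakayama \<chi> (a * b)) = \<chi> (a * (b * v))"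
    using nakayama_eq[of "a * b" v] by (simp add: mult.assoc)
  also have "\<dots> = \<chi> (b * (v * nakayama \<chi> a))"
    using nakayama_eq[of a "b * v"] by (simp add: mult.assoc)
  also have "\<dots> = \<chi> (v * (nakayama \<chi> a * nakayama \<chi> b))"
    using nakayama_eq[of b "v * nakayama \<chi> a"] by (simp add: mult.assoc)
  finally show "\<chi> (v * nakayama \<chi> (a * b)) = \<chi> (v * (nakayama \<chi> a * nakayama \<chi> b))" .
qed

lemma nakayama_zero: "nakayama \<chi> 0 = 0"
proof (rule generating_character_right_faithful)
  fix v
  show "\<chi> (v * nakayama \<chi> 0) = \<chi> (v * 0)"
    using nakayama_eq[of 0 v] by simp
qed

lemma character_nakayama: "\<chi> (nakayama \<chi> a) = \<chi> a"
  using nakayama_eq[of a 1] by simp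

end

section \<open>Homogeneous weights are invariant under ring automorphisms\<close>

lemma left_ideal_gen_self: "x \<in> left_ideal_gen x"
  unfolding left_ideal_gen_def by (auto intro: exI[of _ 1])

lemma left_ideal_gen_subset: "y \<in> left_ideal_gen x \<Longrightarrow> left_ideal_gen y \<subseteq> left_ideal_gen x"
  unfolding left_ideal_gen_def by (auto simp flip: mult.assoc)

lemma left_ideal_gen_image:
  assumes "surj \<sigma>" and mult: "\<And>a b. \<sigma> (a * b) = \<sigma> a * \<sigma> b"
  shows "left_ideal_gen (\<sigma> x) = \<sigma> ` left_ideal_gen x"
proof
  show "left_ideal_gen (\<sigma> x) \<subseteq> \<sigma> ` left_ideal_gen x"
  proof
    fix z assume "z \<in> left_ideal_gen (\<sigma> x)"
    then obtain s where z: "z = s * \<sigma> x" unfolding left_ideal_gen_def by blast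
    obtain r where "s = \<sigma> r" using \<open>surj \<sigma>\<close> by (rule surjE)
    then have "z = \<sigma> (r * x)" by (simp only: z mult)
    then show "z \<in> \<sigma> ` left_ideal_gen x" unfolding left_ideal_gen_def by blast
  qed
  show "\<sigma> ` left_ideal_gen x \<subseteq> left_ideal_gen (\<sigma> x)"
    unfolding left_ideal_gen_def by (auto simp only: mult)
qed

lemma is_hom_weightD:
  assumes "is_hom_weight \<omega>"
  shows "\<omega> 0 = 0"
    and "left_ideal_gen x = left_ideal_gen y \<Longrightarrow> \<omega> x = \<omega> y"
    and "x \<noteq> 0 \<Longrightarrow> (\<Sum>y\<in>left_ideal_gen x. \<omega> y) = real (card (left_ideal_gen x))"
  using assms unfolding is_hom_weight_def by blast+

lemma sum_left_ideal_gen_split: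
  assumes "is_hom_weight \<omega>"
  shows "(\<Sum>y\<in>left_ideal_gen x. \<omega> y)
    = real (card {y\<in>left_ideal_gen x. left_ideal_gen y = left_ideal_gen x}) * \<omega> x
      + (\<Sum>y\<in>{y\<in>left_ideal_gen x. left_ideal_gen y \<noteq> left_ideal_gen x}. \<omega> y)"
proof -
  let ?A = "{y\<in>left_ideal_gen x. left_ideal_gen y = left_ideal_gen x}"
  let ?B = "{y\<in>left_ideal_gen x. left_ideal_gen y \<noteq> left_ideal_gen x}"
  have "sum \<omega> (?A \<union> ?B) = sum \<omega> ?A + sum \<omega> ?B"
    by (rule sum.union_disjoint) auto
  moreover have "?A \<union> ?B = left_ideal_gen x" by blast
  moreover have "sum \<omega> ?A = (\<Sum>y\<in>?A. \<omega> x)"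
    by (rule sum.cong) (auto dest: is_hom_weightD(2)[OF assms])
  ultimately show ?thesis by simp
qed

lemma hom_weight_unique:
  fixes \<omega>1 \<omega>2 :: "'a::{ring_1,finite} \<Rightarrow> real"
  assumes h1: "is_hom_weight \<omega>1" and h2: "is_hom_weight \<omega>2"
  shows "\<omega>1 = \<omega>2"
proof
  fix x
  show "\<omega>1 x = \<omega>2 x"
  proof (induction "card (left_ideal_gen x)" arbitrary: x rule: less_induct)
    case less
    show ?case
    proof (cases "x = 0")
      case True
      then show ?thesis using is_hom_weightD(1)[OF h1] is_hom_weightD(1)[OF h2] by simp
    next
      case False
      let ?S = "left_ideal_gen x"
      let ?A = "{y\<in>?S. left_ideal_gen y = ?S}" and ?B = "{y\<in>?S. left_ideal_gen y \<noteq> ?S}"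
      have "(\<Sum>y\<in>?B. \<omega>1 y) = (\<Sum>y\<in>?B. \<omega>2 y)"
      proof (rule sum.cong[OF refl])
        fix y assume "y \<in> ?B"
        then have "left_ideal_gen y \<subset> ?S" using left_ideal_gen_subset by blast
        then have "card (left_ideal_gen y) < card ?S" by (rule psubset_card_mono[rotated]) simp
        then show "\<omega>1 y = \<omega>2 y" by (rule less)
      qed
      moreover have "(\<Sum>y\<in>?S. \<omega>1 y) = (\<Sum>y\<in>?S. \<omega>2 y)"
        using is_hom_weightD(3)[OF h1 False] is_hom_weightD(3)[OF h2 False] by simp
      ultimately have "real (card ?A) * \<omega>1 x = real (card ?A) * \<omega>2 x"
        using sum_left_ideal_gen_split[OF h1, of x] sum_left_ideal_gen_split[OF h2, of x] by simp
      moreover have "x \<in> ?A" by (simp add: left_ideal_gen_self)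
      then have "card ?A \<noteq> 0" by (auto simp: card_eq_0_iff)
      ultimately show ?thesis by simp
    qed
  qed
qed

lemma is_hom_weight_comp_automorphism:
  fixes \<omega> :: "'a::{ring_1,finite} \<Rightarrow> real" and \<sigma> :: "'a \<Rightarrow> 'a"
  assumes \<omega>: "is_hom_weight \<omega>" and "bij \<sigma>"
    and mult: "\<And>a b. \<sigma> (a * b) = \<sigma> a * \<sigma> b" and zero: "\<sigma> 0 = 0"
  shows "is_hom_weight (\<omega> \<circ> \<sigma>)"
proof -
  have inj: "inj \<sigma>" using \<open>bij \<sigma>\<close> by (rule bij_is_inj)
  have L: "left_ideal_gen (\<sigma> x) = \<sigma> ` left_ideal_gen x" for x
    using bij_is_surj[OF \<open>bij \<sigma>\<close>] mult by (rule left_ideal_gen_image)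
  show ?thesis
    unfolding is_hom_weight_def comp_apply
  proof (intro conjI allI impI)
    show "\<omega> (\<sigma> 0) = 0" using is_hom_weightD(1)[OF \<omega>] zero by simp
  next
    fix x y :: 'a assume "left_ideal_gen x = left_ideal_gen y"
    then show "\<omega> (\<sigma> x) = \<omega> (\<sigma> y)" by (intro is_hom_weightD(2)[OF \<omega>]) (simp add: L)
  next
    fix x :: 'a assume "x \<noteq> 0"
    then have "\<sigma> x \<noteq> 0" using zero inj by (metis injD)
    from is_hom_weightD(3)[OF \<omega> this]
    show "(\<Sum>y\<in>left_ideal_gen x. \<omega> (\<sigma> y)) = real (card (left_ideal_gen x))"
      unfolding L using inj_on_subset[OF inj] by (simp add: sum.reindex card_image)
  qed
qed

lemma sum_level_set_reindex:
  assumes "bij \<sigma>" and "\<And>a. \<omega> (\<sigma> a) = \<omega> a" and "P \<in> level_partition \<omega>"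
  shows "(\<Sum>a\<in>P. f (\<sigma> a)) = (\<Sum>a\<in>P. f a)"
proof -
  obtain t where P: "P = {a. \<omega> a = t}" using assms(3) unfolding level_partition_def by blast
  have "P \<subseteq> \<sigma> ` P"
  proof
    fix a assume "a \<in> P"
    moreover obtain a' where "a = \<sigma> a'" using bij_is_surj[OF assms(1)] by (rule surjE)
    ultimately show "a \<in> \<sigma> ` P" using assms(2) unfolding P by auto
  qed
  moreover have "\<sigma> ` P \<subseteq> P" using assms(2) unfolding P by auto
  ultimately have "bij_betw \<sigma> P P"
    using inj_on_subset[OF bij_is_inj[OF assms(1)]] unfolding bij_betw_def by blast
  then show ?thesis by (rule sum.reindex_bij_betw)
qed

theorem theorem5p12:
  fixes \<omega> :: "'a::{ring_1,finite} \<Rightarrow> real" and \<chi> :: "'a \<Rightarrow> complex"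
  assumes "frobenius_ring TYPE('a)"
    and "is_hom_weight \<omega>"
    and "generating_character \<chi>"
  shows "(\<forall>P\<in>level_partition \<omega>. \<forall>b. (\<Sum>a\<in>P. \<chi> (a * b)) = (\<Sum>a\<in>P. \<chi> (b * a)))
         \<and> left_dual_rel (level_partition \<omega>) \<chi> = right_dual_rel (level_partition \<omega>) \<chi>"
proof -
  let ?\<sigma> = "nakayama \<chi>"
  note \<sigma> = bij_nakayama[OF assms(3)] nakayama_mult[OF assms(3)] nakayama_zero[OF assms(3)]
  have "\<omega> \<circ> ?\<sigma> = \<omega>"
    using hom_weight_unique is_hom_weight_comp_automorphism[OF assms(2) \<sigma>] assms(2) by blast
  then have \<omega>_\<sigma>: "\<omega> (?\<sigma> a) = \<omega> a" for a by (metis comp_apply)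
  have key: "(\<Sum>a\<in>P. \<chi> (a * b)) = (\<Sum>a\<in>P. \<chi> (b * a))" if "P \<in> level_partition \<omega>" for P b
  proof -
    have "\<chi> (a * b) = \<chi> (?\<sigma> a * ?\<sigma> b)" for a
      using character_nakayama[OF assms(3), of "a * b"] \<sigma>(2) by simp
    then have "(\<Sum>a\<in>P. \<chi> (a * b)) = (\<Sum>a\<in>P. \<chi> (?\<sigma> a * ?\<sigma> b))" by simp
    also have "\<dots> = (\<Sum>a\<in>P. \<chi> (a * ?\<sigma> b))"
      using sum_level_set_reindex[OF \<sigma>(1) \<omega>_\<sigma> that] .
    also have "\<dots> = (\<Sum>a\<in>P. \<chi> (b * a))"
      using nakayama_eq[OF assms(3), of b] by simp
    finally show ?thesis .
  qed
  moreover have "left_dual_rel (level_partition \<omega>) \<chi> = right_dual_rel (level_partition \<omega>) \<chi>"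
    unfolding left_dual_rel_def right_dual_rel_def using key by (intro ext) simp
  ultimately show ?thesis by blast
qed

end
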